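(* For every bipartition $(\mathbf L,\mathbf R)$ of a finite set $\mathbf A\subset\mathbb{N}^*$, there exists an elementary interval bipartition $(\mathbf L',\mathbf R')$ such that $\boldsymbol\lambda(\mathbf L,\mathbf R)=\boldsymbol\lambda(\mathbf L',\mathbf R')$.
   Context: A bipartition of $\mathbf A$ is an ordered pair $(\mathbf L,\mathbf R)$ with $\mathbf L\cup\mathbf R=\mathbf A$, $\mathbf L\cap\mathbf R=\varnothing$. An interval bipartition is a bipartition of an interval $\{i,i+1,\dots,j\}$ of $\mathbb{N}^*$ (or of $\varnothing$); it is elementary if either $\mathbf L=\mathbf R=\varnothing$, or $1\in\mathbf L$ and $\max(\mathbf L\cup\mathbf R)\in\mathbf R$. For a bipartition $(\mathbf L,\mathbf R)$ of a finite set with $\mathbf L=\{\ell_1<\dots<\ell_p\}$ nonempty, $\boldsymbol\lambda(\mathbf L,\mathbf R)$ is the integer partition with parts $\boldsymbol\lambda(\mathbf L,\mathbf R)_i=\#\{r\in\mathbf R:\ell_i<r\}$, $i=1,\dots,p$ (zero parts discarded); if $\mathbf L=\varnothing$, $\boldsymbol\lambda(\mathbf L,\mathbf R)=(0)$. *)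

theory Defs
  imports Main
begin

definition bipartition :: "nat set \<Rightarrow> nat set \<Rightarrow> nat set \<Rightarrow> bool" where
  "bipartition A L R \<longleftrightarrow> L \<union> R = A \<and> L \<inter> R = {}"

text \<open>Interval bipartition: a bipartition of an interval {i..j} of positive integers
  (or of the empty set, which is {i..j} for i > j).\<close>
definition interval_bipartition :: "nat set \<Rightarrow> nat set \<Rightarrow> bool" where
  "interval_bipartition L R \<longleftrightarrow> (\<exists>i j. 1 \<le> i \<and> bipartition {i..j} L R)"

definition elementary_interval_bipartition :: "nat set \<Rightarrow> nat set \<Rightarrow> bool" where
  "elementary_interval_bipartition L R \<longleftrightarrow>
     interval_bipartition L R \<and>
     ((L = {} \<and> R = {}) \<or> (1 \<in> L \<and> Max (L \<union> R) \<in> R))"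

text \<open>The integer partition lambda(L, R), represented as the (nonincreasing) list of its
  nonzero parts: the i-th part is the number of r in R with l_i < r, where
  l_1 < ... < l_p enumerate L; zero parts are discarded. The partition (0) (case L = {})
  is the empty partition, represented by the empty list.\<close>
definition lam :: "nat set \<Rightarrow> nat set \<Rightarrow> nat list" where
  "lam L R = filter (\<lambda>k. 0 < k) (map (\<lambda>l. card {r \<in> R. l < r}) (sorted_list_of_set L))"

end

theory Submission
  imports Defs
begin

text \<open>Elements of \<open>L\<close> with no larger element of \<open>R\<close> only produce zero parts, and elements
  of \<open>R\<close> with no smaller element of \<open>L\<close> are counted by no part; discarding both leaves a
  bipartition whose least element lies in \<open>L\<close> and whose greatest element lies in \<open>R\<close>.
  Since \<open>\<lambda>(L, R)\<close> only depends on the relative order of the elements, relabelling this set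
  order-preservingly onto \<open>{1..n}\<close> gives an elementary interval bipartition with the same
  partition.\<close>

lemma sorted_list_of_set_filter:
  assumes "finite A"
  shows "sorted_list_of_set {x \<in> A. P x} = filter P (sorted_list_of_set A)"
  using assms by (subst sorted_list_of_set_unique[symmetric])
    (auto intro: sorted_wrt_filter simp flip: distinct_card)

lemma sorted_list_of_set_image_strict_mono:
  fixes f :: "'a::linorder \<Rightarrow> 'b::linorder"
  assumes "finite A" and "strict_mono_on A f"
  shows "sorted_list_of_set (f ` A) = map f (sorted_list_of_set A)"
proof -
  have "sorted_wrt (<) (map f (sorted_list_of_set A))"
    unfolding sorted_wrt_map
    using sorted_list_of_set.strict_sorted_key_list_of_set[of A]
    by (rule sorted_wrt_mono_rel[rotated]) (use assms in \<open>auto simp: strict_mono_on_def\<close>)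
  then show ?thesis
    using assms by (subst sorted_list_of_set_unique[symmetric])
      (auto simp: strict_sorted_iff card_image strict_mono_on_imp_inj_on)
qed

lemma ex_strict_mono_on_onto_atLeastAtMost:
  fixes S :: "'a::linorder set"
  assumes "finite S"
  obtains f :: "'a \<Rightarrow> nat" where "strict_mono_on S f" and "f ` S = {1..card S}"
proof
  define f where "f x = card {y \<in> S. y \<le> x}" for x
  show mono: "strict_mono_on S f"
  proof (rule strict_mono_onI)
    fix x y assume "x \<in> S" "y \<in> S" "x < y"
    then have "{z \<in> S. z \<le> x} \<subset> {z \<in> S. z \<le> y}"
      by (auto dest: leD)
    then show "f x < f y" unfolding f_def by (rule psubset_card_mono[rotated]) (use assms in auto)
  qed
  have "f ` S \<subseteq> {1..card S}"
  proof
    fix z assume "z \<in> f ` S"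
    then obtain x where "x \<in> S" "z = f x" by auto
    then show "z \<in> {1..card S}"
      using assms unfolding f_def by (auto simp: card_gt_0_iff Suc_le_eq intro: card_mono)
  qed
  moreover have "card (f ` S) = card S"
    using card_image[OF strict_mono_on_imp_inj_on[OF mono]] .
  ultimately show "f ` S = {1..card S}" by (simp add: card_subset_eq)
qed

lemma lam_eq_map_positive:
  assumes "finite L"
  shows "lam L R = map (\<lambda>l. card {r \<in> R. l < r}) (sorted_list_of_set {l \<in> L. 0 < card {r \<in> R. l < r}})"
  using assms unfolding lam_def by (simp add: filter_map comp_def sorted_list_of_set_filter)

lemma lam_filter_left:
  assumes "finite L" and "finite R"
  shows "lam L R = lam {l \<in> L. \<exists>r \<in> R. l < r} R"
proof -
  let ?L1 = "{l \<in> L. \<exists>r \<in> R. l < r}"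
  have "{l \<in> L. 0 < card {r \<in> R. l < r}} = ?L1"
    using \<open>finite R\<close> by (auto simp: card_gt_0_iff)
  moreover from this have "{l \<in> ?L1. 0 < card {r \<in> R. l < r}} = ?L1"
    by blast
  ultimately show ?thesis
    using assms by (simp add: lam_eq_map_positive)
qed

lemma lam_filter_right:
  assumes "finite L"
  shows "lam L R = lam L {r \<in> R. \<exists>l \<in> L. l < r}"
proof -
  have "{r \<in> R. l < r} = {r \<in> {r \<in> R. \<exists>l \<in> L. l < r}. l < r}" if "l \<in> L" for l
    using that by auto
  then show ?thesis
    using assms unfolding lam_def by (intro arg_cong[where f = "filter _"] map_cong) auto
qed

lemma lam_image_strict_mono:
  fixes f :: "nat \<Rightarrow> nat"
  assumes "finite L" and mono: "strict_mono_on (L \<union> R) f"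
  shows "lam (f ` L) (f ` R) = lam L R"
proof -
  have inj: "inj_on f (L \<union> R)"
    using mono by (rule strict_mono_on_imp_inj_on)
  have sorted_image: "sorted_list_of_set (f ` L) = map f (sorted_list_of_set L)"
    using assms by (intro sorted_list_of_set_image_strict_mono) (auto intro: monotone_on_subset)
  have card_above: "card {r \<in> f ` R. f l < r} = card {r \<in> R. l < r}" if "l \<in> L" for l
  proof -
    have "{r \<in> f ` R. f l < r} = f ` {r \<in> R. l < r}"
      using that strict_mono_on_less[OF mono] by auto
    moreover have "inj_on f {r \<in> R. l < r}"
      using inj by (rule inj_on_subset) auto
    ultimately show ?thesis
      by (simp add: card_image)
  qed
  show ?thesis
    unfolding lam_def sorted_image map_map comp_def
    using \<open>finite L\<close> card_above by (intro arg_cong[where f = "filter _"] map_cong) auto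
qed

lemma elementary_interval_bipartitionI:
  assumes "bipartition {1..n} L R" and "1 \<in> L" and "n \<in> R"
  shows "elementary_interval_bipartition L R"
proof -
  have "L \<union> R = {1..n}"
    using assms(1) by (simp add: bipartition_def)
  then have "Max (L \<union> R) = n"
    using assms(3) by (auto intro: Max_eqI)
  then show ?thesis
    using assms unfolding elementary_interval_bipartition_def interval_bipartition_def by auto
qed

lemma ex_elementary_interval_bipartition_same_lam:
  assumes "finite L" and "finite R" and "L \<inter> R = {}" and "L \<noteq> {}"
    and left_below: "\<forall>l \<in> L. \<exists>r \<in> R. l < r"
    and right_above: "\<forall>r \<in> R. \<exists>l \<in> L. l < r"
  shows "\<exists>L' R'. elementary_interval_bipartition L' R' \<and> lam L' R' = lam L R"
proof -
  let ?n = "card (L \<union> R)"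
  obtain f :: "nat \<Rightarrow> nat" where mono: "strict_mono_on (L \<union> R) f" and onto: "f ` (L \<union> R) = {1..?n}"
    using assms(1,2) by (meson ex_strict_mono_on_onto_atLeastAtMost finite_UnI)
  have less: "f x < f y \<longleftrightarrow> x < y" if "x \<in> L \<union> R" "y \<in> L \<union> R" for x y
    using strict_mono_on_less[OF mono that] .
  have range: "1 \<le> f x \<and> f x \<le> ?n" if "x \<in> L \<union> R" for x
    using onto that by auto
  have "1 \<le> ?n"
    using assms(1,2,4) by (simp add: Suc_le_eq card_gt_0_iff)
  then have "1 \<in> f ` (L \<union> R)" and "?n \<in> f ` (L \<union> R)"
    using onto by auto
  then obtain x y where x: "x \<in> L \<union> R" "f x = 1" and y: "y \<in> L \<union> R" "f y = ?n"
    by (metis imageE)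
  have "x \<notin> R"
  proof
    assume "x \<in> R"
    then obtain l where "l \<in> L" "l < x" using right_above by blast
    then show False using less[of l x] range[of l] x by simp
  qed
  have "y \<notin> L"
  proof
    assume "y \<in> L"
    then obtain r where "r \<in> R" "y < r" using left_below by blast
    then show False using less[of y r] range[of r] y by simp
  qed
  have "x \<in> L" and "y \<in> R"
    using x y \<open>x \<notin> R\<close> \<open>y \<notin> L\<close> by blast+
  moreover have "bipartition {1..?n} (f ` L) (f ` R)"
    using onto assms(3) inj_on_image_Int[OF strict_mono_on_imp_inj_on[OF mono], of L R]
    by (auto simp: bipartition_def image_Un)
  ultimately have "elementary_interval_bipartition (f ` L) (f ` R)"
    using x y by (intro elementary_interval_bipartitionI) (auto intro: rev_image_eqI)
  moreover have "lam (f ` L) (f ` R) = lam L R"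
    using assms(1) mono by (rule lam_image_strict_mono)
  ultimately show ?thesis by blast
qed

theorem lemma3p10:
  fixes A L R :: "nat set"
  assumes "finite A" and "0 \<notin> A" and "bipartition A L R"
  shows "\<exists>L' R'. elementary_interval_bipartition L' R' \<and> lam L R = lam L' R'"
proof -
  have fin: "finite L" "finite R" and disj: "L \<inter> R = {}"
    using assms(1,3) by (auto simp: bipartition_def)
  define L1 where "L1 = {l \<in> L. \<exists>r \<in> R. l < r}"
  define R1 where "R1 = {r \<in> R. \<exists>l \<in> L1. l < r}"
  have "finite L1"
    using fin by (simp add: L1_def)
  have "lam L R = lam L1 R"
    unfolding L1_def using fin by (rule lam_filter_left)
  also have "\<dots> = lam L1 R1"
    unfolding R1_def using \<open>finite L1\<close> by (rule lam_filter_right)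
  finally have lam_trim: "lam L R = lam L1 R1" .
  show ?thesis
  proof (cases "L1 = {}")
    case True
    have "bipartition {1..0} {} {}"
      by (simp add: bipartition_def)
    then have "elementary_interval_bipartition {} {}"
      unfolding elementary_interval_bipartition_def interval_bipartition_def by blast
    moreover have "R1 = {}"
      using True by (simp add: R1_def)
    ultimately show ?thesis
      using True lam_trim by blast
  next
    case False
    have "\<forall>l \<in> L1. \<exists>r \<in> R1. l < r" and "\<forall>r \<in> R1. \<exists>l \<in> L1. l < r"
      unfolding R1_def by (auto simp: L1_def)
    moreover have "finite R1" "L1 \<inter> R1 = {}"
      using fin disj by (auto simp: L1_def R1_def)
    ultimately obtain L' R' where "elementary_interval_bipartition L' R'" and "lam L' R' = lam L1 R1"
      using ex_elementary_interval_bipartition_same_lam \<open>finite L1\<close> False by blast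
    then show ?thesis
      using lam_trim by metis
  qed
qed

end
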